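(* Let $n\in\mathbb N$ and let $f(z)=\sum_{j\ge0}a_jz^j$ be extremal for $M_n$ with $a_0>0$. Then $a_0\ge e^{-2n}$.
   Context: $\mathbb D$ is the open unit disc; $\mathcal B_0=\{f$ holomorphic on $\mathbb D: 0<|f|\le1\}$; $M_n(f)=\mathrm{Re}\,a_n$; $f\in\mathcal B_0$ is extremal for $M_n$ if $M_n(f)\ge M_n(F)$ for all $F\in\mathcal B_0$. *)

theory Defs
  imports "HOL-Complex_Analysis.Complex_Analysis"
begin

definition B0 :: "(complex \<Rightarrow> complex) set" where
  "B0 = {f. f holomorphic_on ball 0 1 \<and> (\<forall>z\<in>ball 0 1. 0 < norm (f z) \<and> norm (f z) \<le> 1)}"

definition taylor_coeff :: "nat \<Rightarrow> (complex \<Rightarrow> complex) \<Rightarrow> complex" where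
  "taylor_coeff n f = (deriv ^^ n) f 0 / of_nat (fact n)"

definition M :: "nat \<Rightarrow> (complex \<Rightarrow> complex) \<Rightarrow> real" where
  "M n f = Re (taylor_coeff n f)"

definition extremal :: "nat \<Rightarrow> (complex \<Rightarrow> complex) \<Rightarrow> bool" where
  "extremal n f \<longleftrightarrow> f \<in> B0 \<and> (\<forall>F\<in>B0. M n F \<le> M n f)"

end

theory Submission
  imports Defs
begin

text \<open>Write the extremal function as f = exp h with Re h \<le> 0 and h(0) = ln a_0, let b_k be the
  coefficients of h and u_k = Re (b_k a_(n-k)). Whenever Re (h + d) \<le> 0, the functions f exp(s d)
  with 0 < s < 1 lie in B0, so extremality forces the n-th coefficient of d f to have non-positive
  real part. The choices d = h and d = -h give u_0 + ... + u_n = 0, and the rotations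
  d(z) = h(e^(iy) z) - h(z) give \<Sum>_(k\<ge>1) u_k (1 - cos k y) \<ge> 0 for all y; a quadrature with
  non-negative weights turns this into \<Sum>_(k\<ge>1) (2k - 1) u_k \<ge> 0. From f' = h' f we get
  \<Sum>_k k u_k = n Re a_n, while u_0 = ln a_0 Re a_n; hence -ln a_0 Re a_n \<le> 2n Re a_n, and
  Re a_n \<ge> 1/2 (compare with the competitor (1 + z^n)/2) yields a_0 \<ge> exp(-2n).\<close>

lemma taylor_coeff_0 [simp]: "taylor_coeff 0 f = f 0"
  by (simp add: taylor_coeff_def)

lemma taylor_coeff_deriv: "taylor_coeff k (deriv h) = of_nat (Suc k) * taylor_coeff (Suc k) h"
proof -
  have "(deriv ^^ k) (deriv h) = (deriv ^^ Suc k) h"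
    by (simp add: funpow_swap1)
  moreover have "fact (Suc k) = (of_nat (Suc k) :: complex) * fact k"
    by (rule fact_Suc)
  ultimately show ?thesis
    by (simp add: taylor_coeff_def del: of_nat_Suc fact_Suc)
qed

lemma taylor_coeff_diff:
  assumes "F holomorphic_on S" "G holomorphic_on S" "open S" "0 \<in> S"
  shows "taylor_coeff k (\<lambda>z. F z - G z) = taylor_coeff k F - taylor_coeff k G"
  using higher_deriv_diff[OF assms] by (simp add: taylor_coeff_def diff_divide_distrib)

lemma taylor_coeff_uminus:
  assumes "F holomorphic_on S" "open S" "0 \<in> S"
  shows "taylor_coeff k (\<lambda>z. - F z) = - taylor_coeff k F"
  using higher_deriv_uminus[OF assms] by (simp add: taylor_coeff_def)

lemma taylor_coeff_cmult:
  assumes "F holomorphic_on S" "open S" "0 \<in> S"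
  shows "taylor_coeff k (\<lambda>z. c * F z) = c * taylor_coeff k F"
  using higher_deriv_cmult[OF assms(1,3,2)] by (simp add: taylor_coeff_def)

lemma taylor_coeff_mult:
  assumes "F holomorphic_on S" "G holomorphic_on S" "open S" "0 \<in> S"
  shows "taylor_coeff n (\<lambda>z. F z * G z) = (\<Sum>k=0..n. taylor_coeff k F * taylor_coeff (n - k) G)"
proof -
  have "taylor_coeff n (\<lambda>z. F z * G z)
      = (\<Sum>k=0..n. of_nat (n choose k) * (deriv ^^ k) F 0 * (deriv ^^ (n - k)) G 0 / fact n)"
    using higher_deriv_mult[OF assms] by (simp add: taylor_coeff_def sum_divide_distrib)
  also have "\<dots> = (\<Sum>k=0..n. taylor_coeff k F * taylor_coeff (n - k) G)"
    by (intro sum.cong refl) (auto simp: binomial_fact taylor_coeff_def field_simps)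
  finally show ?thesis .
qed

lemma taylor_coeff_rotate:
  assumes "h holomorphic_on ball 0 r" "0 < r" "norm u \<le> 1"
  shows "taylor_coeff k (\<lambda>z. h (u * z)) = u ^ k * taylor_coeff k h"
proof -
  have "norm u * norm z < r" if "norm z < r" for z
    using assms(3) that mult_left_le_one_le[of "norm z" "norm u"] by simp
  then have "(deriv ^^ k) (\<lambda>z. h (u * z + 0)) 0 = u ^ k * (deriv ^^ k) h (u * 0 + 0)"
    using assms by (intro higher_deriv_compose_linear'[where S = "ball 0 r"]) (auto simp: norm_mult)
  then show ?thesis
    by (simp add: taylor_coeff_def)
qed

lemma norm_taylor_coeff_le:
  assumes "F holomorphic_on ball 0 R" "0 < r" "r < R"
    and "\<And>z. norm z = r \<Longrightarrow> norm (F z) \<le> B"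
  shows "norm (taylor_coeff n F) \<le> B / r ^ n"
proof -
  have "norm ((deriv ^^ n) F 0) \<le> fact n * B / r ^ n"
    using assms by (intro Cauchy_inequality holomorphic_on_imp_continuous_on)
      (auto elim!: holomorphic_on_subset)
  then show ?thesis
    by (simp add: taylor_coeff_def norm_divide field_simps)
qed

lemma norm_exp_sub_one_sub_le:
  fixes z :: complex
  assumes "norm z \<le> 1"
  shows "norm (exp z - 1 - z) \<le> 3 * norm z ^ 2"
proof -
  have "norm (exp z - (\<Sum>i\<le>1. z ^ i / fact i)) \<le> exp (norm z) * norm z ^ 2 / fact 1"
    using Taylor_exp_field[of z 1] by (simp add: numeral_2_eq_2)
  moreover have "exp (norm z) \<le> 3"
    using assms exp_le by (meson exp_le_cancel_iff order_trans)
  ultimately show ?thesis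
    by (simp add: diff_diff_eq) (meson mult_right_mono order_trans zero_le_power2)
qed

lemma exp_in_B0:
  assumes "q holomorphic_on ball 0 1" "\<And>z. z \<in> ball 0 1 \<Longrightarrow> Re (q z) \<le> 0"
  shows "(\<lambda>z. exp (q z)) \<in> B0"
  using assms by (auto simp: B0_def intro!: holomorphic_intros)

lemma B0_exp_Re_nonpos:
  assumes "f \<in> B0" "\<And>z. z \<in> ball 0 1 \<Longrightarrow> f z = exp (h z)" "z \<in> ball 0 1"
  shows "Re (h z) \<le> 0"
  using assms by (auto simp: B0_def)

lemma norm_taylor_coeff_exp_remainder_le:
  assumes fB: "f \<in> B0"
    and h: "h holomorphic_on ball 0 1" and f_exp: "\<And>z. z \<in> ball 0 1 \<Longrightarrow> f z = exp (h z)"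
    and d: "d holomorphic_on ball 0 1" and B: "\<And>z. norm z = 1/2 \<Longrightarrow> norm (d z) \<le> B"
    and s: "0 \<le> s" "s * B \<le> 1"
  shows "norm (taylor_coeff n (\<lambda>z. exp (h z + of_real s * d z) - f z - of_real s * (d z * f z)))
    \<le> 3 * 2 ^ n * B ^ 2 * s ^ 2"
proof -
  have f: "f holomorphic_on ball 0 1"
    using fB by (simp add: B0_def)
  have "norm (exp (h z + of_real s * d z) - f z - of_real s * (d z * f z)) \<le> 3 * (s * B) ^ 2"
    if z: "norm z = 1/2" for z
  proof -
    have ds: "norm (of_real s * d z) \<le> s * B"
      using B[OF z] s by (simp add: norm_mult mult_left_mono)
    have "exp (h z + of_real s * d z) - f z - of_real s * (d z * f z)
        = f z * (exp (of_real s * d z) - 1 - of_real s * d z)"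
      using f_exp[of z] z by (simp add: exp_add algebra_simps)
    moreover have "norm (f z) \<le> 1"
      using fB z by (simp add: B0_def)
    moreover have "norm (exp (of_real s * d z) - 1 - of_real s * d z) \<le> 3 * norm (of_real s * d z) ^ 2"
      using ds s by (intro norm_exp_sub_one_sub_le) simp
    moreover have "3 * norm (of_real s * d z) ^ 2 \<le> 3 * (s * B) ^ 2"
      using ds by (intro mult_left_mono power_mono) auto
    ultimately show ?thesis
      using mult_mono[of "norm (f z)" 1 _ "3 * (s * B) ^ 2"] by (simp add: norm_mult)
  qed
  then have "norm (taylor_coeff n (\<lambda>z. exp (h z + of_real s * d z) - f z - of_real s * (d z * f z)))
      \<le> 3 * (s * B) ^ 2 / (1/2) ^ n"
    using h f d by (intro norm_taylor_coeff_le[of _ 1]) (auto intro!: holomorphic_intros)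
  then show ?thesis
    by (simp add: power_mult_distrib power_one_over mult_ac)
qed

text \<open>For 0 < s < 1 the perturbation f exp(s d) = exp((1 - s) h + s (h + d)) stays in B0, and
  its n-th coefficient is that of f + s d f up to O(s^2).\<close>
lemma extremal_first_variation:
  assumes extr: "extremal n f"
    and h: "h holomorphic_on ball 0 1" and f_exp: "\<And>z. z \<in> ball 0 1 \<Longrightarrow> f z = exp (h z)"
    and d: "d holomorphic_on ball 0 1" and Re_hd: "\<And>z. z \<in> ball 0 1 \<Longrightarrow> Re (h z + d z) \<le> 0"
  shows "Re (taylor_coeff n (\<lambda>z. d z * f z)) \<le> 0"
proof -
  have fB: "f \<in> B0" and f_max: "\<And>F. F \<in> B0 \<Longrightarrow> M n F \<le> M n f"
    using extr by (auto simp: extremal_def)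
  have f: "f holomorphic_on ball 0 1"
    using fB by (simp add: B0_def)
  have "compact (d ` cball 0 (1/2))"
    using d by (intro compact_continuous_image holomorphic_on_imp_continuous_on)
      (auto elim!: holomorphic_on_subset)
  then obtain B where "B > 0" and B: "\<And>z. z \<in> cball 0 (1/2) \<Longrightarrow> norm (d z) \<le> B"
    by (metis compact_imp_bounded bounded_pos image_eqI)
  define K where "K = 3 * 2 ^ n * B ^ 2"
  have linear_bound: "Re (taylor_coeff n (\<lambda>z. d z * f z)) \<le> K * s"
    if s: "0 < s" "s < 1" "s * B \<le> 1" for s
  proof -
    define G where "G = (\<lambda>z. exp (h z + of_real s * d z))"
    have "G \<in> B0"
      unfolding G_def
    proof (rule exp_in_B0)
      fix z :: complex assume z: "z \<in> ball 0 1"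
      have "Re (h z + of_real s * d z) = (1 - s) * Re (h z) + s * Re (h z + d z)"
        by (simp add: algebra_simps)
      also have "\<dots> \<le> 0"
        using B0_exp_Re_nonpos[OF fB f_exp z] Re_hd[OF z] s
        by (intro add_nonpos_nonpos mult_nonneg_nonpos) auto
      finally show "Re (h z + of_real s * d z) \<le> 0" .
    qed (use h d in \<open>intro holomorphic_intros\<close>)
    then have G: "G holomorphic_on ball 0 1" and "Re (taylor_coeff n G) \<le> Re (taylor_coeff n f)"
      using f_max[of G] by (auto simp: B0_def M_def)
    have "taylor_coeff n (\<lambda>z. G z - f z - of_real s * (d z * f z))
        = taylor_coeff n G - taylor_coeff n f - of_real s * taylor_coeff n (\<lambda>z. d z * f z)"
      using G f d
      by (simp add: taylor_coeff_diff[where S = "ball 0 1"] taylor_coeff_cmult[where S = "ball 0 1"]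
          holomorphic_intros)
    moreover have "norm (taylor_coeff n (\<lambda>z. G z - f z - of_real s * (d z * f z))) \<le> K * s ^ 2"
      unfolding G_def K_def using fB h f_exp d B s by (intro norm_taylor_coeff_exp_remainder_le) auto
    ultimately have "s * Re (taylor_coeff n (\<lambda>z. d z * f z)) \<le> K * s ^ 2"
      using abs_Re_le_cmod[of "taylor_coeff n (\<lambda>z. G z - f z - of_real s * (d z * f z))"]
        \<open>Re (taylor_coeff n G) \<le> _\<close> by simp
    then show ?thesis
      using s by (simp add: power2_eq_square)
  qed
  show ?thesis
  proof (rule tendsto_lowerbound)
    show "((\<lambda>s. K * s) \<longlongrightarrow> 0) (at_right 0)"
      by (auto intro!: tendsto_eq_intros)
    have "eventually (\<lambda>s. s \<in> {0<..<min 1 (1/B)}) (at_right 0)"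
      using \<open>B > 0\<close> by (intro eventually_at_right_real) simp
    then show "eventually (\<lambda>s. Re (taylor_coeff n (\<lambda>z. d z * f z)) \<le> K * s) (at_right 0)"
      by eventually_elim (use \<open>B > 0\<close> linear_bound in \<open>auto simp: field_simps\<close>)
  qed simp
qed

definition quad_node :: "nat \<Rightarrow> nat \<Rightarrow> real" where
  "quad_node N j = (2 * real j + 1) * pi / real N"

definition quad_weight :: "nat \<Rightarrow> nat \<Rightarrow> real" where
  "quad_weight N j = (1 + cos (quad_node N j)) / (1 - cos (quad_node N j))"

lemma one_minus_cos_quad_node_pos:
  assumes "j < N"
  shows "1 - cos (quad_node N j) > 0"
proof -
  have "0 < (2 * real j + 1) * pi" "(2 * real j + 1) * pi < (2 * real N) * pi"
    using assms by (auto intro: mult_strict_right_mono)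
  then have "0 < quad_node N j / 2" "quad_node N j / 2 < pi"
    using assms by (auto simp: quad_node_def field_simps)
  then have "sin (quad_node N j / 2) > 0"
    by (rule sin_gt_zero)
  then show ?thesis
    using cos_double_sin[of "quad_node N j / 2"] by simp
qed

lemma quad_weight_nonneg: "j < N \<Longrightarrow> quad_weight N j \<ge> 0"
  using one_minus_cos_quad_node_pos[of j N] cos_ge_minus_one[of "quad_node N j"]
  unfolding quad_weight_def by (intro divide_nonneg_pos) linarith+

text \<open>Telescoping: multiplying by 2 sin(m pi/N) turns the sum into differences of
  sin(2 m j pi/N), which vanish at both ends.\<close>
lemma sum_cos_quad_node:
  assumes "1 \<le> m" "m < N"
  shows "(\<Sum>j<N. cos (real m * quad_node N j)) = 0"
proof -
  define a where "a = real m * pi / real N"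
  define F where "F = (\<lambda>j::nat. sin (2 * real j * a))"
  have "sin a > 0"
    using assms by (intro sin_gt_zero) (auto simp: a_def field_simps)
  have "2 * sin a * cos (real m * quad_node N j) = F (Suc j) - F j" for j
  proof -
    have "real m * quad_node N j = (2 * real j + 1) * a"
      by (simp add: a_def quad_node_def)
    moreover have "2 * real (Suc j) * a = (2 * real j + 1) * a + a" "2 * real j * a = (2 * real j + 1) * a - a"
      by (simp_all add: algebra_simps)
    ultimately show ?thesis
      by (simp only: F_def sin_add sin_diff) simp
  qed
  then have "2 * sin a * (\<Sum>j<N. cos (real m * quad_node N j)) = F N - F 0"
    by (simp add: sum_distrib_left sum_lessThan_telescope)
  also have "F N = 0"
    using assms sin_npi[of "2 * m"] by (simp add: F_def a_def mult_ac)
  finally show ?thesis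
    using \<open>sin a > 0\<close> by (simp add: F_def)
qed

lemma one_minus_cos_second_difference:
  fixes m x w :: real
  assumes "w * (1 - cos x) = 1 + cos x"
  shows "(1 - cos ((m + 2) * x)) * w - 2 * (1 - cos ((m + 1) * x)) * w + (1 - cos (m * x)) * w
    = 2 * cos ((m + 1) * x) + cos ((m + 2) * x) + cos (m * x)"
proof -
  have cos_sum: "cos ((m + 2) * x) + cos (m * x) = 2 * cos ((m + 1) * x) * cos x"
    using cos_add[of "(m + 1) * x" x] cos_diff[of "(m + 1) * x" x] by (simp add: algebra_simps)
  have "(1 - cos ((m + 2) * x)) * w - 2 * (1 - cos ((m + 1) * x)) * w + (1 - cos (m * x)) * w
      = w * (2 * cos ((m + 1) * x) - (cos ((m + 2) * x) + cos (m * x)))"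
    by (simp add: algebra_simps)
  also have "\<dots> = 2 * cos ((m + 1) * x) * (w * (1 - cos x))"
    unfolding cos_sum by (simp add: algebra_simps)
  also have "\<dots> = 2 * cos ((m + 1) * x) + (cos ((m + 2) * x) + cos (m * x))"
    unfolding assms cos_sum by (simp add: algebra_simps)
  finally show ?thesis
    by simp
qed

lemma sum_quad_weight_one_minus_cos:
  assumes "k \<le> n"
  shows "(\<Sum>j<Suc n. (1 - cos (real k * quad_node (Suc n) j)) * quad_weight (Suc n) j)
    = (if k = 0 then 0 else real (Suc n) * (2 * real k - 1))"
  using assms
proof (induction k rule: less_induct)
  case (less k)
  define N where "N = Suc n"
  define Q where "Q = (\<lambda>k::nat. \<Sum>j<N. (1 - cos (real k * quad_node N j)) * quad_weight N j)"
  define S where "S = (\<lambda>m::nat. \<Sum>j<N. cos (real m * quad_node N j))"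
  have weight: "quad_weight N j * (1 - cos (quad_node N j)) = 1 + cos (quad_node N j)" if "j < N" for j
    using one_minus_cos_quad_node_pos[OF that] by (simp add: quad_weight_def)
  have S: "S m = 0" if "1 \<le> m" "m \<le> n" for m
    using that unfolding S_def N_def by (intro sum_cos_quad_node) auto
  consider "k = 0" | "k = 1" | m where "k = m + 2"
    by (metis One_nat_def add_2_eq_Suc' not0_implies_Suc)
  then show ?case
  proof cases
    case 1
    then show ?thesis by simp
  next
    case 2
    have "Q 1 = (\<Sum>j<N. 1 + cos (quad_node N j))"
      unfolding Q_def using weight by (intro sum.cong) (auto simp: mult.commute)
    also have "\<dots> = real N + S 1"
      by (simp add: S_def sum.distrib)
    finally have "Q 1 = real N + S 1" .
    then show ?thesis
      using less.prems S[of 1] 2 by (simp add: Q_def N_def)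
  next
    case 3
    have "Q (m + 2) - 2 * Q (m + 1) + Q m = 2 * S (m + 1) + S (m + 2) + S m"
      using one_minus_cos_second_difference[OF weight, of _ "real m"]
      by (simp add: Q_def S_def sum_subtractf sum.distrib sum_distrib_left algebra_simps)
    moreover have "S (m + 1) = 0" "S (m + 2) = 0"
      using less.prems 3 S[of "m + 1"] S[of "m + 2"] by simp_all
    moreover have "S m = (if m = 0 then real N else 0)"
      using less.prems 3 S[of m] by (simp add: S_def)
    moreover have "Q (m + 1) = real N * (2 * real (m + 1) - 1)"
      "Q m = (if m = 0 then 0 else real N * (2 * real m - 1))"
      using less.IH[of "m + 1"] less.IH[of m] less.prems 3 by (simp_all add: Q_def N_def)
    ultimately show ?thesis
      using 3 by (simp add: Q_def N_def algebra_simps split: if_splits)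
  qed
qed

text \<open>Quadrature at the nodes (2j+1) pi/(n+1) with the non-negative weights
  squared cotangents of the half-nodes reproduces 2k - 1 from 1 - cos(k x) for 1 \<le> k \<le> n.\<close>
lemma sum_odd_mult_nonneg_if_cos_sum_nonneg:
  fixes u :: "nat \<Rightarrow> real"
  assumes "\<And>x. (\<Sum>k=1..n. u k * (1 - cos (real k * x))) \<ge> 0"
  shows "(\<Sum>k=1..n. (2 * real k - 1) * u k) \<ge> 0"
proof -
  have "0 \<le> (\<Sum>j<Suc n. quad_weight (Suc n) j * (\<Sum>k=1..n. u k * (1 - cos (real k * quad_node (Suc n) j))))"
    using assms quad_weight_nonneg by (meson lessThan_iff mult_nonneg_nonneg sum_nonneg)
  also have "\<dots> = (\<Sum>k=1..n. u k * (\<Sum>j<Suc n. (1 - cos (real k * quad_node (Suc n) j)) * quad_weight (Suc n) j))"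
    by (simp add: sum_distrib_left sum_distrib_right mult_ac sum.swap[of _ "{..<Suc n}"]
        del: sum.lessThan_Suc)
  also have "\<dots> = (\<Sum>k=1..n. u k * (real (Suc n) * (2 * real k - 1)))"
    by (intro sum.cong refl) (simp add: sum_quad_weight_one_minus_cos del: sum.lessThan_Suc)
  also have "\<dots> = real (Suc n) * (\<Sum>k=1..n. (2 * real k - 1) * u k)"
    by (simp add: sum_distrib_left mult_ac)
  finally show ?thesis
    by (simp add: zero_le_mult_iff)
qed

lemma taylor_coeff_power_self: "taylor_coeff n (\<lambda>z. z ^ n) = 1"
proof -
  have "(deriv ^^ n) (\<lambda>z. (z - 0) ^ n) 0 = fact n"
    by (simp only: higher_deriv_power) (simp add: pochhammer_fact)
  then show ?thesis
    by (simp add: taylor_coeff_def)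
qed

lemma taylor_coeff_exp_recurrence:
  assumes h: "h holomorphic_on ball 0 1" and f_exp: "\<And>z. z \<in> ball 0 1 \<Longrightarrow> f z = exp (h z)"
  shows "of_nat n * taylor_coeff n f = (\<Sum>k=1..n. of_nat k * taylor_coeff k h * taylor_coeff (n - k) f)"
proof (cases n)
  case (Suc m)
  have f: "f holomorphic_on ball 0 1"
    using h f_exp by (subst holomorphic_cong[OF refl f_exp]) (auto intro!: holomorphic_intros)
  have "deriv f z = deriv h z * f z" if z: "z \<in> ball 0 1" for z
  proof -
    have "((\<lambda>z. exp (h z)) has_field_derivative exp (h z) * deriv h z) (at z)"
      using holomorphic_derivI[OF h open_ball z] by (auto intro!: derivative_eq_intros)
    then have "(f has_field_derivative exp (h z) * deriv h z) (at z)"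
      by (rule has_field_derivative_transform_within_open[OF _ open_ball z]) (simp add: f_exp)
    then show ?thesis
      using f_exp[OF z] by (simp add: DERIV_imp_deriv mult.commute)
  qed
  then have "(deriv ^^ m) (deriv f) 0 = (deriv ^^ m) (\<lambda>z. deriv h z * f z) 0"
    by (intro higher_deriv_transform_within_open[where S = "ball 0 1"])
      (auto intro!: holomorphic_intros holomorphic_deriv h f)
  then have "of_nat n * taylor_coeff n f = taylor_coeff m (\<lambda>z. deriv h z * f z)"
    using Suc taylor_coeff_deriv[of m f] by (simp add: taylor_coeff_def del: of_nat_Suc)
  also have "\<dots> = (\<Sum>i=0..m. taylor_coeff i (deriv h) * taylor_coeff (m - i) f)"
    using h f by (intro taylor_coeff_mult[where S = "ball 0 1"]) (auto intro: holomorphic_deriv)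
  also have "\<dots> = (\<Sum>i=0..m. of_nat (Suc i) * taylor_coeff (Suc i) h * taylor_coeff (n - Suc i) f)"
    using Suc by (simp add: taylor_coeff_deriv)
  also have "\<dots> = (\<Sum>k=1..n. of_nat k * taylor_coeff k h * taylor_coeff (n - k) f)"
    using Suc sum.shift_bounds_cl_Suc_ivl[of "\<lambda>k. of_nat k * taylor_coeff k h * taylor_coeff (n - k) f" 0 m]
    by simp
  finally show ?thesis .
qed simp

lemma B0_exp_log:
  assumes "f \<in> B0" "f 0 = of_real a" "a > 0"
  obtains h where "h holomorphic_on ball 0 1" "\<And>z. z \<in> ball 0 1 \<Longrightarrow> f z = exp (h z)"
    "h 0 = of_real (ln a)"
proof -
  have "f holomorphic_on ball 0 1" "\<And>z. z \<in> ball 0 1 \<Longrightarrow> f z \<noteq> 0"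
    using assms(1) by (auto simp: B0_def)
  then obtain g where g: "g holomorphic_on ball 0 1" and f_exp: "\<And>z. z \<in> ball 0 1 \<Longrightarrow> f z = exp (g z)"
    using contractible_imp_holomorphic_log convex_imp_contractible[OF convex_ball] by metis
  have "exp (g 0) = of_real a"
    using f_exp[of 0] assms(2) by simp
  then have "exp (g z - g 0 + of_real (ln a)) = f z" if "z \<in> ball 0 1" for z
    using f_exp[OF that] assms(3) by (simp add: exp_add exp_diff exp_of_real)
  then show ?thesis
    using g by (intro that[of "\<lambda>z. g z - g 0 + of_real (ln a)"]) (auto intro!: holomorphic_intros)
qed

lemma extremal_0_imp_Re_ge_1:
  assumes "extremal 0 f"
  shows "Re (f 0) \<ge> 1"
  using assms exp_in_B0[of "\<lambda>_. 0"] by (auto simp: extremal_def M_def)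

lemma extremal_imp_Re_coeff_ge_half:
  assumes "extremal n f" "n \<ge> 1"
  shows "Re (taylor_coeff n f) \<ge> 1/2"
proof -
  define F where "F = (\<lambda>z::complex. (1 + z ^ n) / 2)"
  have "F \<in> B0"
    unfolding B0_def
  proof (intro CollectI conjI ballI)
    show "F holomorphic_on ball 0 1"
      unfolding F_def by (intro holomorphic_intros) auto
    fix z :: complex assume "z \<in> ball 0 1"
    then have "norm (z ^ n) < 1"
      using assms(2) by (simp add: norm_power power_less_one_iff)
    then show "0 < norm (F z)" "norm (F z) \<le> 1"
      using norm_triangle_ineq2[of 1 "- (z ^ n)"] norm_triangle_ineq[of 1 "z ^ n"]
      by (auto simp: F_def norm_divide)
  qed
  moreover have tcF: "taylor_coeff n F = 1/2"
  proof -
    have "taylor_coeff n F = taylor_coeff n (\<lambda>z. 1/2 * (z ^ n - (- 1)))"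
      by (rule arg_cong[where f = "taylor_coeff n"]) (auto simp: F_def)
    also have "\<dots> = 1/2 * taylor_coeff n (\<lambda>z. z ^ n - (- 1))"
      by (rule taylor_coeff_cmult[where S = UNIV]) (auto intro!: holomorphic_intros)
    also have "taylor_coeff n (\<lambda>z. z ^ n - (- 1)) = taylor_coeff n (\<lambda>z. z ^ n) - taylor_coeff n (\<lambda>_. - 1)"
      by (rule taylor_coeff_diff[where S = UNIV]) (auto intro!: holomorphic_intros)
    finally show ?thesis
      using assms(2) by (simp add: taylor_coeff_power_self taylor_coeff_def)
  qed
  ultimately have "M n F \<le> M n f"
    using assms(1) by (simp add: extremal_def)
  then show ?thesis
    unfolding M_def tcF by simp
qed

lemma extremal_Re_sum_eq_0:
  assumes extr: "extremal n f"
    and h: "h holomorphic_on ball 0 1" and f_exp: "\<And>z. z \<in> ball 0 1 \<Longrightarrow> f z = exp (h z)"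
  shows "(\<Sum>k=0..n. Re (taylor_coeff k h * taylor_coeff (n - k) f)) = 0"
proof -
  have f: "f holomorphic_on ball 0 1"
    using extr by (simp add: extremal_def B0_def)
  have Re_h: "Re (h z) \<le> 0" if "z \<in> ball 0 1" for z
    using extr f_exp that by (auto simp: extremal_def intro: B0_exp_Re_nonpos)
  have "Re (taylor_coeff n (\<lambda>z. h z * f z)) \<le> 0"
  proof (rule extremal_first_variation[OF extr h f_exp h])
    show "Re (h z + h z) \<le> 0" if "z \<in> ball 0 1" for z
      using Re_h[OF that] by simp
  qed
  moreover have "Re (taylor_coeff n (\<lambda>z. - h z * f z)) \<le> 0"
    by (intro extremal_first_variation[OF extr h f_exp]) (auto intro!: holomorphic_intros h)
  moreover have "taylor_coeff n (\<lambda>z. - h z * f z) = - taylor_coeff n (\<lambda>z. h z * f z)"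
    using taylor_coeff_uminus[of "\<lambda>z. h z * f z" "ball 0 1" n] h f by (simp add: holomorphic_intros)
  ultimately show ?thesis
    using taylor_coeff_mult[OF h f] by simp
qed

lemma extremal_rotation_variation:
  assumes extr: "extremal n f"
    and h: "h holomorphic_on ball 0 1" and f_exp: "\<And>z. z \<in> ball 0 1 \<Longrightarrow> f z = exp (h z)"
  shows "Re (\<Sum>k=0..n. (exp (\<i> * of_real (real k * y)) - 1) * (taylor_coeff k h * taylor_coeff (n - k) f)) \<le> 0"
proof -
  define e where "e = exp (\<i> * of_real y)"
  have "norm e = 1"
    by (simp add: e_def)
  then have "(\<lambda>z. e * z) ` ball 0 1 \<subseteq> ball 0 1"
    by (auto simp: norm_mult)
  then have he: "(\<lambda>z. h (e * z)) holomorphic_on ball 0 1"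
    using holomorphic_on_compose_gen[of "\<lambda>z. e * z" "ball 0 1" h "ball 0 1"] h
    by (auto simp: o_def intro!: holomorphic_intros)
  define d where "d = (\<lambda>z. h (e * z) - h z)"
  have d: "d holomorphic_on ball 0 1"
    unfolding d_def using he h by (intro holomorphic_intros)
  have f: "f holomorphic_on ball 0 1"
    using extr by (simp add: extremal_def B0_def)
  have "Re (taylor_coeff n (\<lambda>z. d z * f z)) \<le> 0"
  proof (rule extremal_first_variation[OF extr h f_exp d])
    fix z :: complex assume "z \<in> ball 0 1"
    then have "e * z \<in> ball 0 1"
      using \<open>norm e = 1\<close> by (simp add: norm_mult)
    then show "Re (h z + d z) \<le> 0"
      using extr f_exp by (auto simp: d_def extremal_def intro: B0_exp_Re_nonpos)
  qed
  moreover have "taylor_coeff k d = (exp (\<i> * of_real (real k * y)) - 1) * taylor_coeff k h" for k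
  proof -
    have "e ^ k = exp (\<i> * of_real (real k * y))"
      unfolding e_def by (simp add: exp_of_nat_mult[symmetric] mult_ac)
    then show ?thesis
      using taylor_coeff_diff[OF he h] taylor_coeff_rotate[OF h, of e k] \<open>norm e = 1\<close>
      by (simp add: d_def algebra_simps)
  qed
  ultimately show ?thesis
    using taylor_coeff_mult[OF d f] by (simp add: mult_ac)
qed

text \<open>Adding the rotation variation for the angles x and -x cancels the imaginary parts.\<close>
lemma extremal_cos_sum_nonneg:
  assumes extr: "extremal n f"
    and h: "h holomorphic_on ball 0 1" and f_exp: "\<And>z. z \<in> ball 0 1 \<Longrightarrow> f z = exp (h z)"
  shows "(\<Sum>k=1..n. Re (taylor_coeff k h * taylor_coeff (n - k) f) * (1 - cos (real k * x))) \<ge> 0"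
proof -
  define C where "C = (\<lambda>k. taylor_coeff k h * taylor_coeff (n - k) f)"
  have Re_rot: "Re (\<Sum>k=0..n. (exp (\<i> * of_real (real k * y)) - 1) * C k)
      = (\<Sum>k=0..n. (cos (real k * y) - 1) * Re (C k) - sin (real k * y) * Im (C k))" for y
    by (simp add: Re_exp Im_exp algebra_simps)
  have rot: "Re (\<Sum>k=0..n. (exp (\<i> * of_real (real k * y)) - 1) * C k) \<le> 0" for y
    unfolding C_def using extr h f_exp by (rule extremal_rotation_variation)
  have "(\<Sum>k=0..n. (cos (real k * x) - 1) * Re (C k) - sin (real k * x) * Im (C k))
      + (\<Sum>k=0..n. (cos (real k * - x) - 1) * Re (C k) - sin (real k * - x) * Im (C k))
      = - 2 * (\<Sum>k=0..n. Re (C k) * (1 - cos (real k * x)))"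
    unfolding sum.distrib[symmetric] sum_distrib_left by (intro sum.cong refl) (simp add: algebra_simps)
  then have "(\<Sum>k=0..n. Re (C k) * (1 - cos (real k * x))) \<ge> 0"
    using rot[of x] rot[of "- x"] unfolding Re_rot by linarith
  then show ?thesis
    by (simp add: C_def sum.atLeast_Suc_atMost[of 0 n])
qed

lemma extremal_log_coeff_bound:
  assumes extr: "extremal n f"
    and h: "h holomorphic_on ball 0 1" and f_exp: "\<And>z. z \<in> ball 0 1 \<Longrightarrow> f z = exp (h z)"
  shows "- Re (h 0 * taylor_coeff n f) \<le> 2 * real n * Re (taylor_coeff n f)"
proof -
  define u where "u = (\<lambda>k. Re (taylor_coeff k h * taylor_coeff (n - k) f))"
  have "u 0 + (\<Sum>k=1..n. u k) = 0"
    using extremal_Re_sum_eq_0[OF extr h f_exp] by (simp add: u_def sum.atLeast_Suc_atMost)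
  moreover have "(\<Sum>k=1..n. real k * u k) = real n * Re (taylor_coeff n f)"
    using arg_cong[OF taylor_coeff_exp_recurrence[OF h f_exp, of n], of Re] by (simp add: u_def mult.assoc)
  moreover have "(\<Sum>k=1..n. (2 * real k - 1) * u k) \<ge> 0"
  proof (rule sum_odd_mult_nonneg_if_cos_sum_nonneg)
    show "(\<Sum>k=1..n. u k * (1 - cos (real k * x))) \<ge> 0" for x
      unfolding u_def using extr h f_exp by (rule extremal_cos_sum_nonneg)
  qed
  moreover have "(\<Sum>k=1..n. (2 * real k - 1) * u k) = 2 * (\<Sum>k=1..n. real k * u k) - (\<Sum>k=1..n. u k)"
    by (simp add: algebra_simps sum_subtractf sum_distrib_left)
  moreover have "u 0 = Re (h 0 * taylor_coeff n f)"
    by (simp add: u_def)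
  ultimately show ?thesis
    by linarith
qed

theorem lemma9:
  fixes n :: nat and f :: "complex \<Rightarrow> complex"
  assumes "extremal n f"
    and "Im (taylor_coeff 0 f) = 0" and "Re (taylor_coeff 0 f) > 0"
  shows "Re (taylor_coeff 0 f) \<ge> exp (- 2 * real n)"
proof (cases "n = 0")
  case True
  then show ?thesis
    using extremal_0_imp_Re_ge_1 assms(1) by simp
next
  case False
  define a0 where "a0 = Re (f 0)"
  have "f 0 = of_real a0" "a0 > 0"
    using assms(2,3) by (simp_all add: a0_def complex_eq_iff)
  then obtain h where h: "h holomorphic_on ball 0 1" and f_exp: "\<And>z. z \<in> ball 0 1 \<Longrightarrow> f z = exp (h z)"
    and h0: "h 0 = of_real (ln a0)"
    using B0_exp_log assms(1) by (metis extremal_def)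
  have "- ln a0 * Re (taylor_coeff n f) \<le> 2 * real n * Re (taylor_coeff n f)"
    using extremal_log_coeff_bound[OF assms(1) h f_exp] by (simp add: h0)
  moreover have "Re (taylor_coeff n f) \<ge> 1/2"
    using extremal_imp_Re_coeff_ge_half assms(1) False by simp
  ultimately have "- 2 * real n \<le> ln a0"
    using mult_le_cancel_right_pos[of "Re (taylor_coeff n f)" "- ln a0"] by simp
  then show ?thesis
    using \<open>a0 > 0\<close> by (simp add: a0_def ln_ge_iff)
qed

end
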